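(* Let $\mathcal P$ be the partition of the unit sphere defined by four distinct great circles, no three of which have a common point, and let $F$ be a quadrilateral face of $\mathcal P$ with interior angles $\pi a,\pi b,\pi c,\pi d$ at its consecutive vertices. Then $$0<a,b,c,d<1,\qquad 0<a+b+c+d-2<2\min(a,b,c,d).$$ The subset of the unit cube in $\mathbb R^4$ defined by these inequalities is an open convex pyramid $\Pi$ with vertex $(1,1,1,1)$ whose base is the octahedron in the hyperplane $a+b+c+d=2$ with vertices $(0,0,1,1)$, $(0,1,0,1)$, $(0,1,1,0)$, $(1,0,0,1)$, $(1,0,1,0)$, $(1,1,0,0)$.
   Context: Four great circles in general position (distinct, no triple intersections) partition the unit sphere into 8 triangular and 6 quadrilateral faces; each quadrilateral face has its four sides on the four distinct circles. *)

theory Defs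
  imports "HOL-Analysis.Analysis"
begin

definition great_circle :: "(real^3) set \<Rightarrow> bool" where
  "great_circle K \<longleftrightarrow> (\<exists>n::real^3. n \<noteq> 0 \<and> K = {x \<in> sphere 0 1. n \<bullet> x = 0})"

definition general_position4 :: "(nat \<Rightarrow> (real^3) set) \<Rightarrow> bool" where
  "general_position4 C \<longleftrightarrow>
     (\<forall>i<4. great_circle (C i)) \<and> inj_on C {..<4} \<and>
     (\<forall>i<4. \<forall>j<4. \<forall>k<4. i \<noteq> j \<and> j \<noteq> k \<and> i \<noteq> k \<longrightarrow> C i \<inter> C j \<inter> C k = {})"

definition faces :: "(nat \<Rightarrow> (real^3) set) \<Rightarrow> (real^3) set set" where
  "faces C = components (sphere 0 1 - (\<Union>i<4. C i))"

definition face_vertices :: "(nat \<Rightarrow> (real^3) set) \<Rightarrow> (real^3) set \<Rightarrow> (real^3) set" where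
  "face_vertices C F = {v \<in> closure F. \<exists>i<4. \<exists>j<4. i \<noteq> j \<and> v \<in> C i \<and> v \<in> C j}"

definition side_dir :: "(nat \<Rightarrow> (real^3) set) \<Rightarrow> (real^3) set \<Rightarrow> real^3 \<Rightarrow> nat \<Rightarrow> real^3 \<Rightarrow> bool" where
  "side_dir C F v i u \<longleftrightarrow> v \<in> C i \<and> norm u = 1 \<and> u \<bullet> v = 0 \<and>
     (\<exists>e>0. \<forall>s. 0 < s \<and> s < e \<longrightarrow> cos s *\<^sub>R v + sin s *\<^sub>R u \<in> C i \<inter> closure F)"

definition interior_angle :: "(nat \<Rightarrow> (real^3) set) \<Rightarrow> (real^3) set \<Rightarrow> real^3 \<Rightarrow> real" where
  "interior_angle C F v = (THE \<theta>. \<exists>i<4. \<exists>j<4. \<exists>u w. i \<noteq> j \<and>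
      side_dir C F v i u \<and> side_dir C F v j w \<and> \<theta> = arccos (u \<bullet> w))"

end

(*
  Choose normals M 0, ..., M 3 of the four circles so that the face F is the spherical cell
  {x. 0 < M i . x for all i}. Its vertices are the points of the closed cell lying on two
  circles C i and C j, and the interior angle there is pi minus the angle between M i and M j.

  By general position the normals satisfy a linear relation L 0 M 0 + ... + L 3 M 3 = 0 with
  all L k nonzero. Evaluated at a vertex on C i and C j, it forces opposite signs of L on the
  two remaining indices. Four distinct vertices are therefore only possible if L has exactly
  two positive coefficients, at p and p', and two negative ones, at q and q'; the vertices then
  lie on the four circle pairs {p, q}, {p, q'}, {p', q}, {p', q'}. Writing the relation as
  l M p + l' M p' = m M q + m' M q' with positive coefficients, spherical triangle inequalities
  show that the four angles between {M p, M p'} and {M q, M q'} sum to less than 2 pi and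
  that each of them is less than the sum of the other three. With a k = 1 - theta k / pi these
  are exactly the stated inequalities.

  The seven listed points satisfy the inequalities non-strictly, so the interior of their
  convex hull satisfies them strictly. Conversely the set is open and each of its points is an
  explicit convex combination of these seven points.
*)

theory Submission
  imports Defs
begin

unbundle cross3_syntax

section \<open>Angles between vectors\<close>

definition vangle :: "'a::real_inner \<Rightarrow> 'a \<Rightarrow> real" where
  "vangle a b = arccos ((a \<bullet> b) / (norm a * norm b))"

lemma vangle_commute: "vangle a b = vangle b a"
  unfolding vangle_def by (simp add: inner_commute mult.commute)

lemma inner_div_norms_bounds:
  fixes a b :: "'a::real_inner"
  shows "-1 \<le> (a \<bullet> b) / (norm a * norm b)" and "(a \<bullet> b) / (norm a * norm b) \<le> 1"
proof -
  have "\<bar>(a \<bullet> b) / (norm a * norm b)\<bar> \<le> 1"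
  proof (cases "a = 0 \<or> b = 0")
    case False
    then show ?thesis
      using Cauchy_Schwarz_ineq2[of a b] by (simp add: abs_div divide_le_eq_1)
  qed auto
  then show "-1 \<le> (a \<bullet> b) / (norm a * norm b)" and "(a \<bullet> b) / (norm a * norm b) \<le> 1"
    by linarith+
qed

lemma cos_vangle: "cos (vangle a b) = (a \<bullet> b) / (norm a * norm b)"
  unfolding vangle_def using inner_div_norms_bounds[of a b] by simp

lemma vangle_bounds: "0 \<le> vangle a b" "vangle a b \<le> pi"
  unfolding vangle_def using inner_div_norms_bounds[of a b] by (auto intro: arccos_lbound arccos_ubound)

lemma vangle_minus_right: "vangle a (- b) = pi - vangle a b"
  unfolding vangle_def using inner_div_norms_bounds[of a b] by (simp add: arccos_minus)

lemma sin_vangle: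
  fixes a b :: "real^3"
  assumes "a \<noteq> 0" "b \<noteq> 0"
  shows "sin (vangle a b) = norm (a \<times> b) / (norm a * norm b)"
proof -
  have "(norm (a \<times> b) / (norm a * norm b))\<^sup>2 = 1 - ((a \<bullet> b) / (norm a * norm b))\<^sup>2"
    using norm_cross_dot[of a b] assms by (simp add: power_divide field_simps)
  then have "sqrt (1 - ((a \<bullet> b) / (norm a * norm b))\<^sup>2) = norm (a \<times> b) / (norm a * norm b)"
    by (metis real_sqrt_abs abs_of_nonneg divide_nonneg_nonneg mult_nonneg_nonneg norm_ge_zero)
  then show ?thesis
    unfolding vangle_def using inner_div_norms_bounds[of a b] by (simp add: sin_arccos)
qed

lemma vangle_gt_0_less_pi:
  fixes a b :: "real^3"
  assumes "a \<times> b \<noteq> 0"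
  shows "0 < vangle a b" and "vangle a b < pi"
proof -
  have "a \<noteq> 0" "b \<noteq> 0"
    using assms by auto
  then have "sin (vangle a b) \<noteq> 0"
    using assms by (simp add: sin_vangle)
  then show "0 < vangle a b" and "vangle a b < pi"
    using vangle_bounds[of a b] by (auto simp: order_le_less)
qed

lemma cos_vangle_add:
  fixes a b c :: "real^3"
  assumes "a \<noteq> 0" "b \<noteq> 0" "c \<noteq> 0"
  shows "cos (vangle a b + vangle b c) = cos (vangle a c) -
    (norm (a \<times> b) * norm (b \<times> c) - (a \<times> b) \<bullet> (b \<times> c)) / (norm a * (norm b)\<^sup>2 * norm c)"
proof -
  have "(a \<times> b) \<bullet> (b \<times> c) = (a \<bullet> b) * (b \<bullet> c) - (a \<bullet> c) * (norm b)\<^sup>2"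
    using dot_cross[of a b b c] by (simp add: power2_norm_eq_inner inner_commute)
  then show ?thesis
    unfolding cos_add cos_vangle sin_vangle[OF assms(1,2)] sin_vangle[OF assms(2,3)]
    using assms by (simp add: field_simps power2_eq_square)
qed

lemma cross_cross_common: "(a \<times> b) \<times> (b \<times> c) = ((a \<times> b) \<bullet> c) *\<^sub>R b"
  using exhaust_3 by (force simp add: cross3_simps)

lemma cos_vangle_add_le:
  fixes a b c :: "real^3"
  assumes "a \<noteq> 0" "b \<noteq> 0" "c \<noteq> 0"
  shows "cos (vangle a b + vangle b c) \<le> cos (vangle a c)"
    and "(a \<times> b) \<bullet> c \<noteq> 0 \<Longrightarrow> cos (vangle a b + vangle b c) < cos (vangle a c)"
proof -
  have D: "0 < norm a * (norm b)\<^sup>2 * norm c"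
    using assms by simp
  have cs: "(a \<times> b) \<bullet> (b \<times> c) \<le> norm (a \<times> b) * norm (b \<times> c)"
    by (rule norm_cauchy_schwarz)
  then show "cos (vangle a b + vangle b c) \<le> cos (vangle a c)"
    unfolding cos_vangle_add[OF assms] using D by simp
  assume "(a \<times> b) \<bullet> c \<noteq> 0"
  then have "(a \<times> b) \<times> (b \<times> c) \<noteq> 0"
    using assms(2) by (simp add: cross_cross_common)
  then have "(a \<times> b) \<bullet> (b \<times> c) \<noteq> norm (a \<times> b) * norm (b \<times> c)"
    using norm_cross_dot[of "a \<times> b" "b \<times> c"] by (auto simp: power_mult_distrib)
  with cs show "cos (vangle a b + vangle b c) < cos (vangle a c)"
    unfolding cos_vangle_add[OF assms] using D by simp
qed

lemma vangle_triangle: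
  fixes a b c :: "real^3"
  assumes "a \<noteq> 0" "b \<noteq> 0" "c \<noteq> 0"
  shows "vangle a c \<le> vangle a b + vangle b c"
proof (cases "vangle a b + vangle b c \<le> pi")
  case True
  then show ?thesis
    using cos_vangle_add_le(1)[OF assms] vangle_bounds[of a b] vangle_bounds[of b c]
      vangle_bounds[of a c] by (simp add: cos_mono_le_eq)
qed (use vangle_bounds[of a c] in auto)

lemma vangle_triangle_strict:
  fixes a b c :: "real^3"
  assumes "(a \<times> b) \<bullet> c \<noteq> 0"
  shows "vangle a c < vangle a b + vangle b c"
proof -
  have nz: "a \<noteq> 0" "b \<noteq> 0" "c \<noteq> 0"
    using assms by auto
  show ?thesis
  proof (cases "vangle a b + vangle b c \<le> pi")
    case True
    then show ?thesis
      using cos_vangle_add_le(2)[OF nz assms] vangle_bounds[of a b] vangle_bounds[of b c]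
        vangle_bounds[of a c] by (simp add: cos_mono_less_eq)
  qed (use vangle_bounds[of a c] in auto)
qed

lemma less_pi_of_sin_pos:
  fixes x :: real
  assumes "0 < sin x" "x \<le> 2 * pi"
  shows "x < pi"
  using assms by (smt (verit) sin_le_zero sin_two_pi)

lemma vangle_add:
  fixes a b c :: "real^3"
  assumes "a \<times> c \<noteq> 0" and "0 < s" "0 < t" and b: "b = s *\<^sub>R a + t *\<^sub>R c"
  shows "vangle a b + vangle b c = vangle a c"
proof -
  have ab: "a \<times> b = t *\<^sub>R (a \<times> c)" and bc: "b \<times> c = s *\<^sub>R (a \<times> c)"
    unfolding b by (simp_all add: cross_add_left cross_add_right cross_mult_left cross_mult_right)
  have nz: "a \<noteq> 0" "b \<noteq> 0" "c \<noteq> 0"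
    using assms(1-3) ab by auto
  have "(a \<times> b) \<bullet> (b \<times> c) = norm (a \<times> b) * norm (b \<times> c)"
    unfolding ab bc using assms(2,3) by (simp add: power2_norm_eq_inner[symmetric] power2_eq_square)
  then have cos_eq: "cos (vangle a b + vangle b c) = cos (vangle a c)"
    by (simp add: cos_vangle_add[OF nz])
  have "norm (a \<times> b) * (b \<bullet> c) + (a \<bullet> b) * norm (b \<times> c) = norm (a \<times> c) * (b \<bullet> (s *\<^sub>R a + t *\<^sub>R c))"
    unfolding ab bc using assms(2,3) by (simp add: algebra_simps inner_commute)
  also have "\<dots> = norm (a \<times> c) * (norm b)\<^sup>2"
    by (simp add: b[symmetric] power2_norm_eq_inner)
  finally have "sin (vangle a b + vangle b c) = norm (a \<times> c) * (norm b)\<^sup>2 / (norm a * (norm b)\<^sup>2 * norm c)"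
    unfolding sin_add cos_vangle sin_vangle[OF nz(1,2)] sin_vangle[OF nz(2,3)]
    using nz by (simp add: field_simps power2_eq_square)
  then have "0 < sin (vangle a b + vangle b c)"
    using assms(1) nz by (simp add: zero_less_divide_iff)
  then have "vangle a b + vangle b c < pi"
    using vangle_bounds[of a b] vangle_bounds[of b c] by (intro less_pi_of_sin_pos) auto
  moreover have "0 \<le> vangle a b + vangle b c"
    using vangle_bounds[of a b] vangle_bounds[of b c] by linarith
  ultimately show ?thesis
    using cos_inj_pi[OF _ _ vangle_bounds[of a c] cos_eq] by simp
qed

lemma triple_product_swap: "(b \<times> a) \<bullet> c = - ((a \<times> b) \<bullet> c)"
  by (simp add: cross3_simps)

lemma vangle_triangle_perimeter:
  fixes p q r :: "real^3"
  assumes "(p \<times> q) \<bullet> r \<noteq> 0"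
  shows "vangle p q + vangle q r + vangle r p < 2 * pi"
proof -
  have "(q \<times> - p) \<bullet> r \<noteq> 0"
    using assms by (simp add: triple_product_swap[of p q])
  then have "vangle q r < vangle q (- p) + vangle (- p) r"
    by (rule vangle_triangle_strict)
  moreover have "vangle q (- p) = pi - vangle p q"
    using vangle_minus_right[of q p] vangle_commute[of q p] by simp
  moreover have "vangle (- p) r = pi - vangle r p"
    using vangle_minus_right[of r p] vangle_commute[of "- p" r] by simp
  ultimately show ?thesis
    by linarith
qed

lemma vangle_less_polygonal:
  fixes a b c d :: "real^3"
  assumes "(a \<times> b) \<bullet> c \<noteq> 0" "d \<noteq> 0"
  shows "vangle a d < vangle a b + vangle b c + vangle c d"
proof -
  have "a \<noteq> 0" "c \<noteq> 0"
    using assms(1) by auto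
  then have "vangle a d \<le> vangle a c + vangle c d"
    using assms(2) by (rule vangle_triangle)
  with vangle_triangle_strict[OF assms(1)] show ?thesis
    by linarith
qed

lemma vangle_quadrilateral_less_2pi:
  fixes n1 n2 n3 n4 :: "real^3"
  assumes "(n1 \<times> n3) \<bullet> n2 \<noteq> 0" "n1 \<times> n4 \<noteq> 0"
    and "0 < l1" "0 < l2" "0 < m3" "0 < m4"
    and rel: "l1 *\<^sub>R n1 + l2 *\<^sub>R n2 = m3 *\<^sub>R n3 + m4 *\<^sub>R n4"
  shows "vangle n1 n3 + vangle n1 n4 + vangle n2 n3 + vangle n2 n4 < 2 * pi"
proof -
  \<comment> \<open>\<open>n2\<close> lies on the arc from \<open>n3\<close> to \<open>d\<close> and \<open>n4\<close> on the arc from \<open>n1\<close> to \<open>d\<close>, so the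
      four angles are bounded by the perimeter of the triangle \<open>n1 n3 d\<close>.\<close>
  define d where "d = l2 *\<^sub>R n2 - m3 *\<^sub>R n3"
  have d': "d = m4 *\<^sub>R n4 - l1 *\<^sub>R n1"
    using rel by (simp add: d_def algebra_simps)
  have "n3 \<times> d = l2 *\<^sub>R (n3 \<times> n2)" "(n1 \<times> n3) \<bullet> d = l2 * ((n1 \<times> n3) \<bullet> n2)"
    by (simp_all add: d_def Cross3.right_diff_distrib cross_mult_right inner_diff_right
        dot_cross_self)
  moreover have "n1 \<times> d = m4 *\<^sub>R (n1 \<times> n4)"
    by (simp add: d' Cross3.right_diff_distrib cross_mult_right)
  moreover have "n3 \<times> n2 \<noteq> 0"
    using assms(1) cross_triple[of n1 n3 n2] by auto
  ultimately have n3d: "n3 \<times> d \<noteq> 0" and n13d: "(n1 \<times> n3) \<bullet> d \<noteq> 0" and n1d: "n1 \<times> d \<noteq> 0"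
    using assms(1-6) by auto
  have "n2 = (m3 / l2) *\<^sub>R n3 + (1 / l2) *\<^sub>R d"
    using assms(4) by (simp add: d_def scaleR_diff_right)
  then have "vangle n3 n2 + vangle n2 d = vangle n3 d"
    using n3d assms(4,5) by (intro vangle_add) auto
  moreover have "n4 = (l1 / m4) *\<^sub>R n1 + (1 / m4) *\<^sub>R d"
    using assms(6) by (simp add: d' scaleR_diff_right)
  then have "vangle n1 n4 + vangle n4 d = vangle n1 d"
    using n1d assms(3,6) by (intro vangle_add) auto
  moreover have "vangle n1 n3 + vangle n3 d + vangle d n1 < 2 * pi"
    using n13d by (rule vangle_triangle_perimeter)
  moreover have "vangle n2 n4 \<le> vangle n2 d + vangle d n4"
    using assms(1,2) n1d by (intro vangle_triangle) auto
  ultimately show ?thesis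
    using vangle_commute[of n3 n2] vangle_commute[of d n4] vangle_commute[of d n1] by linarith
qed

section \<open>Normals of great circles in general position\<close>

definition general_position_normals :: "(nat \<Rightarrow> real^3) \<Rightarrow> bool" where
  "general_position_normals M \<longleftrightarrow>
     (\<forall>i<4. \<forall>j<4. \<forall>k<4. i \<noteq> j \<and> j \<noteq> k \<and> i \<noteq> k \<longrightarrow> (M i \<times> M j) \<bullet> M k \<noteq> 0)"

lemma general_position_normalsD:
  "general_position_normals M \<Longrightarrow> i < 4 \<Longrightarrow> j < 4 \<Longrightarrow> k < 4 \<Longrightarrow> i \<noteq> j \<Longrightarrow> j \<noteq> k \<Longrightarrow> i \<noteq> k
    \<Longrightarrow> (M i \<times> M j) \<bullet> M k \<noteq> 0"
  unfolding general_position_normals_def by blast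

lemma ex_third_index:
  fixes i j :: nat
  obtains k where "k < 4" "k \<noteq> i" "k \<noteq> j"
proof -
  consider "0 \<noteq> i \<and> 0 \<noteq> j" | "1 \<noteq> i \<and> 1 \<noteq> j" | "2 \<noteq> i \<and> 2 \<noteq> j"
    by fastforce
  then show ?thesis
    using that[of 0] that[of 1] that[of 2] by cases auto
qed

lemma general_position_normals_cross:
  assumes "general_position_normals M" "i < 4" "j < 4" "i \<noteq> j"
  shows "M i \<times> M j \<noteq> 0"
proof -
  obtain k where "k < 4" "k \<noteq> i" "k \<noteq> j"
    by (rule ex_third_index)
  then show ?thesis
    using general_position_normalsD[OF assms(1-3) \<open>k < 4\<close> assms(4)] by auto
qed

lemma orthogonal_imp_parallel_cross:
  fixes a b x :: "real^3"
  assumes "x \<bullet> a = 0" "x \<bullet> b = 0" "a \<times> b \<noteq> 0"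
  shows "x = ((x \<bullet> (a \<times> b)) / ((a \<times> b) \<bullet> (a \<times> b))) *\<^sub>R (a \<times> b)"
proof -
  define c where "c = a \<times> b"
  have "x \<times> c = 0"
    using assms(1,2) by (simp add: c_def Lagrange)
  then have "(c \<bullet> c) *\<^sub>R x = (x \<bullet> c) *\<^sub>R c"
    using Lagrange[of c x c] cross_skew[of x c] by (simp add: inner_commute)
  moreover have "c \<bullet> c \<noteq> 0"
    using assms(3) by (simp add: c_def)
  ultimately have "x = (1 / (c \<bullet> c)) *\<^sub>R ((x \<bullet> c) *\<^sub>R c)"
    by (metis (no_types, lifting) divide_self_if mult.commute scaleR_one scaleR_scaleR times_divide_eq_right)
  then show ?thesis
    by (simp add: c_def)
qed

lemma unit_orthogonal_eq:
  fixes a b x y z :: "real^3"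
  assumes "a \<times> b \<noteq> 0" and "norm x = 1" "norm y = 1"
    and "x \<bullet> a = 0" "x \<bullet> b = 0" "y \<bullet> a = 0" "y \<bullet> b = 0"
    and "0 < z \<bullet> x" "0 \<le> z \<bullet> y"
  shows "x = y"
proof -
  define c where "c = a \<times> b"
  obtain \<alpha> \<beta> where x: "x = \<alpha> *\<^sub>R c" and y: "y = \<beta> *\<^sub>R c"
    using orthogonal_imp_parallel_cross[OF assms(4,5,1)] orthogonal_imp_parallel_cross[OF assms(6,7,1)]
    unfolding c_def by metis
  have "\<bar>\<alpha>\<bar> = \<bar>\<beta>\<bar>"
    using assms(1-3) unfolding x y c_def by (metis norm_scaleR mult_cancel_right norm_eq_zero)
  moreover have "0 < \<alpha> * (z \<bullet> c)" "0 \<le> \<beta> * (z \<bullet> c)"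
    using assms(8,9) unfolding x y by simp_all
  ultimately have "\<alpha> = \<beta>"
    by (auto simp: abs_if zero_less_mult_iff zero_le_mult_iff split: if_splits)
  then show ?thesis
    using x y by simp
qed

lemma parallel_normals_same_plane:
  fixes a b x :: "real^3"
  assumes "a \<times> b = 0" "a \<noteq> 0" "b \<noteq> 0"
  shows "x \<bullet> a = 0 \<longleftrightarrow> x \<bullet> b = 0"
proof -
  have "(x \<bullet> b) *\<^sub>R a = (x \<bullet> a) *\<^sub>R b"
    using Lagrange[of x a b] assms(1) by simp
  then show ?thesis
    using assms(2,3) by (metis scale_eq_0_iff)
qed

lemma general_position4_normals:
  assumes "general_position4 C"
  obtains N where "\<And>i. i < 4 \<Longrightarrow> C i = {x \<in> sphere 0 1. N i \<bullet> x = 0}"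
    and "general_position_normals N"
proof -
  have "\<forall>i<4. \<exists>n. n \<noteq> 0 \<and> C i = {x \<in> sphere 0 1. n \<bullet> x = 0}"
    using assms unfolding general_position4_def great_circle_def by blast
  then obtain N where N: "\<And>i. i < 4 \<Longrightarrow> N i \<noteq> 0 \<and> C i = {x \<in> sphere 0 1. N i \<bullet> x = 0}"
    by metis
  have "(N i \<times> N j) \<bullet> N k \<noteq> 0"
    if ijk: "i < 4" "j < 4" "k < 4" "i \<noteq> j" "j \<noteq> k" "i \<noteq> k" for i j k
  proof
    assume triple: "(N i \<times> N j) \<bullet> N k = 0"
    show False
    proof (cases "N i \<times> N j = 0")
      case True
      then have "x \<bullet> N i = 0 \<longleftrightarrow> x \<bullet> N j = 0" for x
        using parallel_normals_same_plane N[OF ijk(1)] N[OF ijk(2)] by blast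
      then have "C i = C j"
        using N[OF ijk(1)] N[OF ijk(2)] by (auto simp: inner_commute)
      then show False
        using assms ijk unfolding general_position4_def inj_on_def by auto
    next
      case False
      let ?x = "(1 / norm (N i \<times> N j)) *\<^sub>R (N i \<times> N j)"
      have "?x \<in> C i \<inter> C j \<inter> C k"
        using False triple N ijk(1-3) by (simp add: dot_cross_self inner_commute)
      then show False
        using assms ijk unfolding general_position4_def by blast
    qed
  qed
  then show ?thesis
    using that N unfolding general_position_normals_def by blast
qed

lemma four_vectors_relation:
  fixes a b c d :: "real^3"
  shows "((b \<times> c) \<bullet> d) *\<^sub>R a - ((a \<times> c) \<bullet> d) *\<^sub>R b + ((a \<times> b) \<bullet> d) *\<^sub>R c - ((a \<times> b) \<bullet> c) *\<^sub>R d = 0"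
  unfolding vec_eq_iff forall_3 by (simp add: cross3_simps)

lemma general_position_normals_relation:
  assumes "general_position_normals M"
  obtains L where "\<And>m. m < 4 \<Longrightarrow> L m \<noteq> 0" and "(\<Sum>m<4. L m *\<^sub>R M m) = 0"
proof
  define L where "L = (\<lambda>m. [(M 1 \<times> M 2) \<bullet> M 3, - ((M 0 \<times> M 2) \<bullet> M 3), (M 0 \<times> M 1) \<bullet> M 3,
    - ((M 0 \<times> M 1) \<bullet> M 2)] ! m)"
  show "L m \<noteq> 0" if "m < 4" for m
  proof -
    from that have "m \<in> {0, 1, 2, 3}"
      by auto
    then show ?thesis
      using general_position_normalsD[OF assms] by (auto simp: L_def)
  qed
  have "(\<Sum>m<4. L m *\<^sub>R M m) = ((M 1 \<times> M 2) \<bullet> M 3) *\<^sub>R M 0 - ((M 0 \<times> M 2) \<bullet> M 3) *\<^sub>R M 1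
      + ((M 0 \<times> M 1) \<bullet> M 3) *\<^sub>R M 2 - ((M 0 \<times> M 1) \<bullet> M 2) *\<^sub>R M 3"
    by (simp add: L_def eval_nat_numeral)
  also have "\<dots> = 0"
    by (rule four_vectors_relation)
  finally show "(\<Sum>m<4. L m *\<^sub>R M m) = 0" .
qed

lemma general_position_normals_vangle_pos:
  assumes "general_position_normals M" "i < 4" "j < 4" "i \<noteq> j"
  shows "0 < vangle (M i) (M j)"
  using vangle_gt_0_less_pi(1)[OF general_position_normals_cross[OF assms]] .

lemma general_position_normals_vangle_less:
  assumes "general_position_normals M" "distinct [p, p', q, q']" "set [p, p', q, q'] \<subseteq> {..<4}"
  shows "vangle (M p) (M q) < vangle (M p) (M q') + vangle (M p') (M q') + vangle (M p') (M q)"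
proof -
  have "(M p \<times> M q') \<bullet> M p' \<noteq> 0" "M q \<noteq> 0"
    using assms general_position_normals_cross[OF assms(1), of q p] general_position_normalsD[OF assms(1)]
    by auto
  from vangle_less_polygonal[OF this] show ?thesis
    by (simp add: vangle_commute[of "M q'"])
qed

lemma general_position_normals_quadrilateral:
  assumes "general_position_normals M" "distinct [p, p', q, q']" "set [p, p', q, q'] \<subseteq> {..<4}"
    and "0 < l" "0 < l'" "0 < m" "0 < m'"
    and "l *\<^sub>R M p + l' *\<^sub>R M p' = m *\<^sub>R M q + m' *\<^sub>R M q'"
  shows "vangle (M p) (M q) + vangle (M p) (M q') + vangle (M p') (M q) + vangle (M p') (M q') < 2 * pi"
proof (rule vangle_quadrilateral_less_2pi[OF _ _ assms(4-8)])
  show "(M p \<times> M q) \<bullet> M p' \<noteq> 0" "M p \<times> M q' \<noteq> 0"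
    using assms(2,3) general_position_normalsD[OF assms(1)] general_position_normals_cross[OF assms(1)]
    by auto
qed

section \<open>Faces as spherical cells\<close>

lemma connected_sphere_cell:
  fixes M :: "'i \<Rightarrow> 'a::euclidean_space"
  assumes "I \<noteq> {}"
  shows "connected {x \<in> sphere 0 1. \<forall>i\<in>I. 0 < M i \<bullet> x}"
proof -
  define K where "K = (\<Inter>i\<in>I. {x. 0 < M i \<bullet> x})"
  have "0 \<notin> K"
    using assms by (auto simp: K_def)
  have "{x \<in> sphere 0 1. \<forall>i\<in>I. 0 < M i \<bullet> x} = (\<lambda>x. (1 / norm x) *\<^sub>R x) ` K"
  proof (intro set_eqI iffI)
    fix y assume "y \<in> (\<lambda>x. (1 / norm x) *\<^sub>R x) ` K"
    then obtain x where "x \<in> K" "y = (1 / norm x) *\<^sub>R x"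
      by blast
    moreover have "x \<noteq> 0"
      using \<open>x \<in> K\<close> \<open>0 \<notin> K\<close> by auto
    ultimately show "y \<in> {x \<in> sphere 0 1. \<forall>i\<in>I. 0 < M i \<bullet> x}"
      by (simp add: K_def)
  qed (force simp: K_def)
  moreover have "connected ((\<lambda>x. (1 / norm x) *\<^sub>R x) ` K)"
  proof (rule connected_continuous_image)
    show "continuous_on K (\<lambda>x. (1 / norm x) *\<^sub>R x)"
      using \<open>0 \<notin> K\<close> by (intro continuous_intros) auto
    show "connected K"
      unfolding K_def by (intro convex_connected convex_INT convex_halfspace_gt)
  qed
  ultimately show ?thesis
    by simp
qed

lemma connected_component_sphere_cell:
  fixes M :: "'i \<Rightarrow> 'a::euclidean_space"
  assumes "I \<noteq> {}" and "x0 \<in> sphere 0 1" "\<forall>i\<in>I. 0 < M i \<bullet> x0"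
  shows "connected_component_set (sphere 0 1 - (\<Union>i\<in>I. {x. M i \<bullet> x = 0})) x0 =
    {x \<in> sphere 0 1. \<forall>i\<in>I. 0 < M i \<bullet> x}" (is "?F = ?U")
proof
  show "?U \<subseteq> ?F"
    using assms by (intro connected_component_maximal connected_sphere_cell) auto
  show "?F \<subseteq> ?U"
  proof
    fix y assume "y \<in> ?F"
    have sub: "?F \<subseteq> sphere 0 1 - (\<Union>i\<in>I. {x. M i \<bullet> x = 0})"
      by (rule connected_component_subset)
    have "0 < M i \<bullet> y" if "i \<in> I" for i
    proof (rule ccontr)
      assume "\<not> 0 < M i \<bullet> y"
      then have "M i \<bullet> y \<le> 0" "0 \<le> M i \<bullet> x0"
        using assms(3) that by (auto simp: less_imp_le)
      moreover have "x0 \<in> ?F"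
        using assms(2,3) by auto
      ultimately obtain z where "z \<in> ?F" "M i \<bullet> z = 0"
        using connected_ivt_hyperplane[OF connected_connected_component \<open>y \<in> ?F\<close>] by blast
      then show False
        using sub that by blast
    qed
    then show "y \<in> ?U"
      using \<open>y \<in> ?F\<close> sub by blast
  qed
qed

lemma mem_closure_sphere_cell:
  fixes M :: "'i \<Rightarrow> 'a::euclidean_space"
  assumes "I \<noteq> {}" and "x0 \<in> sphere 0 1" "\<forall>i\<in>I. 0 < M i \<bullet> x0"
    and "y \<in> sphere 0 1" "\<forall>i\<in>I. 0 \<le> M i \<bullet> y"
  shows "y \<in> closure {x \<in> sphere 0 1. \<forall>i\<in>I. 0 < M i \<bullet> x}"
proof -
  define w where "w t = (1 - t) *\<^sub>R y + t *\<^sub>R x0" for t :: real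
  define g where "g t = (1 / norm (w t)) *\<^sub>R w t" for t
  have pos: "0 < M i \<bullet> w t" if "i \<in> I" "0 < t" "t \<le> 1" for i t
  proof -
    have "0 \<le> (1 - t) * (M i \<bullet> y)" "0 < t * (M i \<bullet> x0)"
      using assms(3,5) that by auto
    then show ?thesis
      by (simp add: w_def inner_add_right)
  qed
  have w_nz: "w t \<noteq> 0" if "0 \<le> t" "t \<le> 1" for t
  proof (cases "t = 0")
    case True
    then show ?thesis
      using assms(4) by (auto simp: w_def)
  next
    case False
    then show ?thesis
      using pos[of _ t] that assms(1) by fastforce
  qed
  have "g ` {0<..1} \<subseteq> {x \<in> sphere 0 1. \<forall>i\<in>I. 0 < M i \<bullet> x}"
    using pos w_nz by (auto simp: g_def)
  moreover have "continuous_on (closure {0<..(1::real)}) g"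
    using w_nz unfolding g_def w_def by (auto intro!: continuous_intros)
  ultimately have "g ` closure {0<..1} \<subseteq> closure {x \<in> sphere 0 1. \<forall>i\<in>I. 0 < M i \<bullet> x}"
    using image_closure_subset[of "{0<..1}" g "closure {x \<in> sphere 0 1. \<forall>i\<in>I. 0 < M i \<bullet> x}"]
      closure_subset by blast
  moreover have "g 0 = y"
    using assms(4) by (simp add: g_def w_def)
  ultimately show ?thesis
    by force
qed

lemma closure_sphere_cell:
  fixes M :: "'i \<Rightarrow> 'a::euclidean_space"
  assumes "I \<noteq> {}" and "x0 \<in> sphere 0 1" "\<forall>i\<in>I. 0 < M i \<bullet> x0"
  shows "closure {x \<in> sphere 0 1. \<forall>i\<in>I. 0 < M i \<bullet> x} = {x \<in> sphere 0 1. \<forall>i\<in>I. 0 \<le> M i \<bullet> x}"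
proof
  have "{x \<in> sphere 0 1. \<forall>i\<in>I. 0 \<le> M i \<bullet> x} = sphere 0 1 \<inter> (\<Inter>i\<in>I. {x. M i \<bullet> x \<ge> 0})"
    by auto
  then have "closed {x \<in> sphere 0 1. \<forall>i\<in>I. 0 \<le> M i \<bullet> x}"
    by (simp add: closed_Int closed_INT closed_halfspace_ge)
  then show "closure {x \<in> sphere 0 1. \<forall>i\<in>I. 0 < M i \<bullet> x} \<subseteq> {x \<in> sphere 0 1. \<forall>i\<in>I. 0 \<le> M i \<bullet> x}"
    by (intro closure_minimal) auto
  show "{x \<in> sphere 0 1. \<forall>i\<in>I. 0 \<le> M i \<bullet> x} \<subseteq> closure {x \<in> sphere 0 1. \<forall>i\<in>I. 0 < M i \<bullet> x}"
    using mem_closure_sphere_cell[OF assms] by blast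
qed

section \<open>Interior angles at the vertices of a face\<close>

text \<open>At the points \<open>\<plusminus>(a \<times> b)\<close> of the great circle \<open>a \<bullet> x = 0\<close>, the unit tangent of that circle
  pointing into the hemisphere \<open>b \<bullet> x > 0\<close>.\<close>
definition tangent_dir :: "real^3 \<Rightarrow> real^3 \<Rightarrow> real^3" where
  "tangent_dir a b = sgn ((a \<bullet> a) *\<^sub>R b - (a \<bullet> b) *\<^sub>R a)"

lemma inner_cross_self: "(a \<times> b) \<bullet> (a \<times> b) = (a \<bullet> a) * (b \<bullet> b) - (a \<bullet> b)\<^sup>2"
  using norm_cross[of a b] by (simp add: power2_norm_eq_inner)

lemma norm_tangent_vector: "norm ((a \<bullet> a) *\<^sub>R b - (a \<bullet> b) *\<^sub>R a) = norm a * norm (a \<times> b)"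
proof -
  have "(norm ((a \<bullet> a) *\<^sub>R b - (a \<bullet> b) *\<^sub>R a))\<^sup>2 = (norm a * norm (a \<times> b))\<^sup>2"
    unfolding power_mult_distrib power2_norm_eq_inner inner_cross_self
    by (simp add: inner_diff_left inner_diff_right inner_commute power2_eq_square algebra_simps)
  then show ?thesis
    by (simp add: power2_eq_iff_nonneg)
qed

lemma tangent_dir:
  assumes "a \<times> b \<noteq> 0"
  shows "norm (tangent_dir a b) = 1" and "a \<bullet> tangent_dir a b = 0"
    and "(a \<times> b) \<bullet> tangent_dir a b = 0" and "0 < b \<bullet> tangent_dir a b"
proof -
  define w where "w = (a \<bullet> a) *\<^sub>R b - (a \<bullet> b) *\<^sub>R a"
  have "a \<noteq> 0"
    using assms by auto
  then have "0 < norm w"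
    using assms norm_tangent_vector[of a b] by (simp add: w_def)
  then show "norm (tangent_dir a b) = 1"
    by (simp add: tangent_dir_def w_def[symmetric] norm_sgn)
  show "a \<bullet> tangent_dir a b = 0" "(a \<times> b) \<bullet> tangent_dir a b = 0"
    by (simp_all add: tangent_dir_def sgn_div_norm inner_diff_right dot_cross_self inner_commute)
  have "b \<bullet> w = (a \<times> b) \<bullet> (a \<times> b)"
    by (simp add: w_def inner_cross_self inner_diff_right inner_commute power2_eq_square)
  then show "0 < b \<bullet> tangent_dir a b"
    using assms \<open>0 < norm w\<close> by (simp add: tangent_dir_def w_def[symmetric] sgn_div_norm)
qed

lemma tangent_dir_inner:
  assumes "a \<times> b \<noteq> 0"
  shows "tangent_dir a b \<bullet> tangent_dir b a = - cos (vangle a b)"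
proof -
  define w1 where "w1 = (a \<bullet> a) *\<^sub>R b - (a \<bullet> b) *\<^sub>R a"
  define w2 where "w2 = (b \<bullet> b) *\<^sub>R a - (b \<bullet> a) *\<^sub>R b"
  have nz: "a \<noteq> 0" "b \<noteq> 0" "0 < norm (a \<times> b)"
    using assms by auto
  have norms: "norm w1 = norm a * norm (a \<times> b)" "norm w2 = norm b * norm (a \<times> b)"
    using norm_tangent_vector[of a b] norm_tangent_vector[of b a] cross_skew[of b a]
    by (simp_all add: w1_def w2_def)
  have "w1 \<bullet> w2 = - (a \<bullet> b) * ((a \<times> b) \<bullet> (a \<times> b))"
    by (simp add: w1_def w2_def inner_cross_self inner_diff_right inner_commute power2_eq_square
        algebra_simps)
  also have "\<dots> = - (a \<bullet> b) * (norm (a \<times> b))\<^sup>2"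
    by (simp add: dot_square_norm)
  finally have "tangent_dir a b \<bullet> tangent_dir b a = - (a \<bullet> b) * (norm (a \<times> b))\<^sup>2 / (norm w1 * norm w2)"
    by (simp add: tangent_dir_def w1_def[symmetric] w2_def[symmetric] sgn_div_norm field_simps)
  then show ?thesis
    using nz by (simp add: norms cos_vangle power2_eq_square)
qed

lemma norm_cos_sin_orthonormal:
  assumes "norm v = 1" "norm u = 1" "u \<bullet> v = 0"
  shows "norm (cos s *\<^sub>R v + sin s *\<^sub>R u) = 1"
proof -
  have "(norm (cos s *\<^sub>R v + sin s *\<^sub>R u))\<^sup>2 = (cos s)\<^sup>2 * (norm v)\<^sup>2 + (sin s)\<^sup>2 * (norm u)\<^sup>2"
    using assms(3) unfolding power2_norm_eq_inner
    by (simp add: inner_add_left inner_add_right inner_commute power2_eq_square)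
  then show ?thesis
    using assms(1,2) norm_ge_zero[of "cos s *\<^sub>R v + sin s *\<^sub>R u"] by (auto simp: power2_eq_1_iff)
qed

lemma sum_zero_sign_change:
  fixes L c :: "'a \<Rightarrow> real"
  assumes "finite K" "K \<noteq> {}" and sum: "(\<Sum>k\<in>K. L k * c k) = 0"
    and "\<And>k. k \<in> K \<Longrightarrow> 0 < c k" "\<And>k. k \<in> K \<Longrightarrow> L k \<noteq> 0"
  shows "\<exists>p\<in>K. 0 < L p" and "\<exists>q\<in>K. L q < 0"
proof -
  show "\<exists>p\<in>K. 0 < L p"
  proof (rule ccontr)
    assume "\<not> (\<exists>p\<in>K. 0 < L p)"
    then have "L k < 0" if "k \<in> K" for k
      using assms(5) that by force
    then have "0 < (\<Sum>k\<in>K. - L k * c k)"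
      using assms(1,2,4) by (intro sum_pos) (auto simp: mult_neg_pos)
    with sum show False
      by (simp add: sum_negf)
  qed
  show "\<exists>q\<in>K. L q < 0"
  proof (rule ccontr)
    assume "\<not> (\<exists>q\<in>K. L q < 0)"
    then have "0 < L k" if "k \<in> K" for k
      using assms(5) that by force
    then have "0 < (\<Sum>k\<in>K. L k * c k)"
      using assms(1,2,4) by (intro sum_pos) auto
    with sum show False
      by simp
  qed
qed

locale four_circle_face =
  fixes C :: "nat \<Rightarrow> (real^3) set" and M :: "nat \<Rightarrow> real^3" and F :: "(real^3) set"
  assumes circle_eq: "\<And>i. i < 4 \<Longrightarrow> C i = {x \<in> sphere 0 1. M i \<bullet> x = 0}"
    and general_position: "general_position_normals M"
    and face_eq: "F = {x \<in> sphere 0 1. \<forall>i<4. 0 < M i \<bullet> x}"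
    and face_nonempty: "F \<noteq> {}"
begin

lemma closure_face: "closure F = {x \<in> sphere 0 1. \<forall>i<4. 0 \<le> M i \<bullet> x}"
proof -
  obtain x0 where "x0 \<in> F"
    using face_nonempty by blast
  then show ?thesis
    using closure_sphere_cell[of "{..<4}" x0 M] by (simp add: face_eq Ball_def lessThan_empty_iff)
qed

definition incident :: "real^3 \<Rightarrow> nat set" where
  "incident v = {i. i < 4 \<and> M i \<bullet> v = 0}"

lemma incident_subset: "incident v \<subseteq> {..<4}"
  by (auto simp: incident_def)

lemma face_vertexD:
  assumes "v \<in> face_vertices C F"
  shows "norm v = 1" and "\<And>m. m < 4 \<Longrightarrow> m \<notin> incident v \<Longrightarrow> 0 < M m \<bullet> v"
  using assms by (auto simp: face_vertices_def closure_face incident_def less_le)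

lemma face_vertex_incident:
  assumes "v \<in> face_vertices C F"
  obtains i j where "i < 4" "j < 4" "i \<noteq> j" "incident v = {i, j}"
proof -
  obtain i j where ij: "i < 4" "j < 4" "i \<noteq> j" "v \<in> C i" "v \<in> C j"
    using assms by (auto simp: face_vertices_def)
  then have v_ij: "v \<bullet> M i = 0" "v \<bullet> M j = 0"
    using circle_eq by (auto simp: inner_commute)
  have cross: "M i \<times> M j \<noteq> 0"
    using general_position_normals_cross[OF general_position ij(1-3)] .
  have "m \<in> {i, j}" if "m \<in> incident v" for m
  proof (rule ccontr)
    assume "m \<notin> {i, j}"
    obtain c where v: "v = c *\<^sub>R (M i \<times> M j)"
      using orthogonal_imp_parallel_cross[OF v_ij cross] by blast
    moreover have "v \<noteq> 0"
      using face_vertexD(1)[OF assms] by auto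
    moreover have "M m \<bullet> v = 0"
      using that by (simp add: incident_def)
    ultimately have "(M i \<times> M j) \<bullet> M m = 0"
      by (simp add: inner_commute)
    moreover have "m < 4"
      using that by (simp add: incident_def)
    ultimately show False
      using general_position_normalsD[OF general_position ij(1,2)] ij(3) \<open>m \<notin> {i, j}\<close> by auto
  qed
  moreover have "i \<in> incident v" "j \<in> incident v"
    using ij(1,2) v_ij by (simp_all add: incident_def inner_commute)
  ultimately show ?thesis
    using that ij(1-3) by blast
qed

lemma face_vertex_eq:
  assumes "v \<in> face_vertices C F" "w \<in> face_vertices C F" "incident v = incident w"
  shows "v = w"
proof -
  obtain i j where ij: "i < 4" "j < 4" "i \<noteq> j" "incident v = {i, j}"
    by (rule face_vertex_incident[OF assms(1)])
  obtain k where k: "k < 4" "k \<noteq> i" "k \<noteq> j"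
    by (rule ex_third_index)
  show ?thesis
  proof (rule unit_orthogonal_eq[of "M i" "M j" v w "M k"])
    show "M i \<times> M j \<noteq> 0"
      using general_position_normals_cross[OF general_position ij(1-3)] .
    show "norm v = 1" "norm w = 1"
      using face_vertexD(1) assms(1,2) by auto
    show "v \<bullet> M i = 0" "v \<bullet> M j = 0" "w \<bullet> M i = 0" "w \<bullet> M j = 0"
      using ij(4) assms(3) by (auto simp: incident_def inner_commute set_eq_iff)
    show "0 < M k \<bullet> v" "0 \<le> M k \<bullet> w"
      using face_vertexD(2)[of _ k] assms k ij(4) by (auto intro: less_imp_le)
  qed
qed


lemma face_vertex_tangent:
  assumes "v \<in> face_vertices C F" "incident v = {i, j}" "i \<noteq> j"
  shows "norm (tangent_dir (M i) (M j)) = 1" and "M i \<bullet> tangent_dir (M i) (M j) = 0"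
    and "tangent_dir (M i) (M j) \<bullet> v = 0" and "0 < M j \<bullet> tangent_dir (M i) (M j)"
proof -
  have ij: "i < 4" "j < 4" "M i \<bullet> v = 0" "M j \<bullet> v = 0"
    using assms(2) by (auto simp: incident_def set_eq_iff)
  have cross: "M i \<times> M j \<noteq> 0"
    using general_position_normals_cross[OF general_position ij(1,2) assms(3)] .
  obtain c where "v = c *\<^sub>R (M i \<times> M j)"
    using orthogonal_imp_parallel_cross[of v "M i" "M j"] ij(3,4) cross by (metis inner_commute)
  then show "tangent_dir (M i) (M j) \<bullet> v = 0"
    using tangent_dir(3)[OF cross] by (simp add: inner_commute)
  show "norm (tangent_dir (M i) (M j)) = 1" "M i \<bullet> tangent_dir (M i) (M j) = 0"
    "0 < M j \<bullet> tangent_dir (M i) (M j)"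
    using tangent_dir[OF cross] by simp_all
qed

lemma eventually_arc_in_closure_face:
  assumes "v \<in> face_vertices C F" "incident v = {i, j}" "0 \<le> M i \<bullet> t" "0 \<le> M j \<bullet> t"
  shows "\<forall>\<^sub>F s in at_right 0. \<forall>m\<in>{..<4}. 0 \<le> M m \<bullet> (cos s *\<^sub>R v + sin s *\<^sub>R t)"
proof -
  have "\<forall>\<^sub>F s in at_right 0. 0 \<le> M m \<bullet> (cos s *\<^sub>R v + sin s *\<^sub>R t)" if "m < 4" for m
  proof (cases "m \<in> {i, j}")
    case True
    then have m: "M m \<bullet> v = 0" "0 \<le> M m \<bullet> t"
      using assms(2-4) by (auto simp: incident_def set_eq_iff)
    have "\<forall>\<^sub>F s in at_right 0. 0 < s \<and> s < pi"
      using pi_gt_zero by (auto simp: eventually_at_right_field intro: exI[of _ pi])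
    then show ?thesis
    proof (rule eventually_mono)
      fix s :: real assume "0 < s \<and> s < pi"
      then have "0 \<le> sin s"
        by (simp add: sin_ge_zero)
      then show "0 \<le> M m \<bullet> (cos s *\<^sub>R v + sin s *\<^sub>R t)"
        using m by (simp add: inner_add_right)
    qed
  next
    case False
    then have "0 < M m \<bullet> v"
      using face_vertexD(2)[OF assms(1) that] assms(2) by simp
    moreover have "((\<lambda>s. M m \<bullet> (cos s *\<^sub>R v + sin s *\<^sub>R t)) \<longlongrightarrow> M m \<bullet> (cos 0 *\<^sub>R v + sin 0 *\<^sub>R t))
        (at_right 0)"
      by (intro tendsto_intros)
    ultimately show ?thesis
      by (auto elim!: eventually_mono dest!: order_tendstoD(1))
  qed
  then show ?thesis
    by (intro eventually_ball_finite) auto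
qed

lemma side_dir_tangent_dir:
  assumes "v \<in> face_vertices C F" "incident v = {i, j}" "i \<noteq> j"
  shows "side_dir C F v i (tangent_dir (M i) (M j))"
proof -
  define t where "t = tangent_dir (M i) (M j)"
  have t: "norm t = 1" "M i \<bullet> t = 0" "t \<bullet> v = 0" "0 < M j \<bullet> t"
    using face_vertex_tangent[OF assms] by (simp_all add: t_def)
  have i: "i < 4" "M i \<bullet> v = 0"
    using assms(2) by (auto simp: incident_def set_eq_iff)
  obtain e where "0 < e" and e: "\<And>s. 0 < s \<Longrightarrow> s < e \<Longrightarrow> \<forall>m<4. 0 \<le> M m \<bullet> (cos s *\<^sub>R v + sin s *\<^sub>R t)"
    using eventually_arc_in_closure_face[OF assms(1,2), of t] t(2,4)
    unfolding eventually_at_right_field by auto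
  have "cos s *\<^sub>R v + sin s *\<^sub>R t \<in> C i \<inter> closure F" if "0 < s" "s < e" for s
    using e[OF that] norm_cos_sin_orthonormal[OF face_vertexD(1)[OF assms(1)] t(1,3)] i t(2)
      circle_eq[OF i(1)]
    by (simp add: closure_face inner_add_right)
  moreover have "v \<in> C i"
    using circle_eq[OF i(1)] i(2) face_vertexD(1)[OF assms(1)] by simp
  ultimately show ?thesis
    unfolding side_dir_def t_def[symmetric] using t(1,3) \<open>0 < e\<close> by blast
qed

lemma side_dir_unique:
  assumes "v \<in> face_vertices C F" "incident v = {i, j}" "i \<noteq> j" "side_dir C F v i u"
  shows "u = tangent_dir (M i) (M j)"
proof -
  obtain e where u: "norm u = 1" "u \<bullet> v = 0" and "0 < e"
    and e: "\<And>s. 0 < s \<Longrightarrow> s < e \<Longrightarrow> cos s *\<^sub>R v + sin s *\<^sub>R u \<in> C i \<inter> closure F"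
    using assms(4) unfolding side_dir_def by blast
  define s where "s = min (e / 2) 1"
  have "0 < s" "s < e" "s < pi"
    using \<open>0 < e\<close> pi_gt3 by (auto simp: s_def)
  then have "0 < sin s" and s: "cos s *\<^sub>R v + sin s *\<^sub>R u \<in> C i \<inter> closure F"
    using e by (auto intro: sin_gt_zero)
  have ij: "i < 4" "j < 4" "M i \<bullet> v = 0" "M j \<bullet> v = 0"
    using assms(2) by (auto simp: incident_def set_eq_iff)
  have "sin s * (M i \<bullet> u) = 0" "0 \<le> sin s * (M j \<bullet> u)"
    using s ij circle_eq[OF ij(1)] by (auto simp: closure_face inner_add_right)
  then have u_ij: "M i \<bullet> u = 0" "0 \<le> M j \<bullet> u"
    using \<open>0 < sin s\<close> by (simp_all add: zero_le_mult_iff)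
  have "M i \<times> v \<noteq> 0"
  proof
    assume "M i \<times> v = 0"
    then have "(norm (M i) * norm v)\<^sup>2 = 0"
      using norm_cross_dot[of "M i" v] ij(3) by simp
    then show False
      using face_vertexD(1)[OF assms(1)] general_position_normals_cross[OF general_position ij(1,2) assms(3)]
      by auto
  qed
  then have "tangent_dir (M i) (M j) = u"
    using face_vertex_tangent[OF assms(1-3)] u u_ij
    by (intro unit_orthogonal_eq[of "M i" v _ _ "M j"]) (auto simp: inner_commute)
  then show ?thesis
    by simp
qed

lemma interior_angle_face_vertex:
  assumes "v \<in> face_vertices C F" "incident v = {i, j}" "i \<noteq> j"
  shows "interior_angle C F v = pi - vangle (M i) (M j)"
proof -
  have ji: "incident v = {j, i}" "j \<noteq> i"
    using assms(2,3) by auto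
  have ij: "i < 4" "j < 4"
    using assms(2) by (auto simp: incident_def set_eq_iff)
  have cross: "M i \<times> M j \<noteq> 0"
    using general_position_normals_cross[OF general_position ij assms(3)] .
  have angle: "arccos (tangent_dir (M i) (M j) \<bullet> tangent_dir (M j) (M i)) = pi - vangle (M i) (M j)"
    using vangle_bounds[of "M i" "M j"]
    by (simp add: tangent_dir_inner[OF cross] arccos_minus arccos_cos)
  have side_index: "i' \<in> {i, j}" if "i' < 4" "side_dir C F v i' u" for i' u
    using that assms(2) circle_eq[OF that(1)] by (auto simp: side_dir_def incident_def set_eq_iff)
  show ?thesis
    unfolding interior_angle_def
  proof (rule the_equality)
    show "\<exists>i'<4. \<exists>j'<4. \<exists>u w. i' \<noteq> j' \<and> side_dir C F v i' u \<and> side_dir C F v j' w \<and>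
        pi - vangle (M i) (M j) = arccos (u \<bullet> w)"
      using ij assms(3) angle side_dir_tangent_dir[OF assms] side_dir_tangent_dir[OF assms(1) ji]
      by metis
  next
    fix \<theta> assume "\<exists>i'<4. \<exists>j'<4. \<exists>u w. i' \<noteq> j' \<and> side_dir C F v i' u \<and> side_dir C F v j' w \<and>
        \<theta> = arccos (u \<bullet> w)"
    then obtain i' j' u w where "i' < 4" "j' < 4" "i' \<noteq> j'" and
      sides: "side_dir C F v i' u" "side_dir C F v j' w" and \<theta>: "\<theta> = arccos (u \<bullet> w)"
      by blast
    then consider "i' = i" "j' = j" | "i' = j" "j' = i"
      using side_index by blast
    then show "\<theta> = pi - vangle (M i) (M j)"
    proof cases
      case 1
      then show ?thesis
        using sides \<theta> angle side_dir_unique[OF assms] side_dir_unique[OF assms(1) ji] by simp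
    next
      case 2
      then show ?thesis
        using sides \<theta> angle side_dir_unique[OF assms] side_dir_unique[OF assms(1) ji]
        by (simp add: inner_commute)
    qed
  qed
qed


lemma face_vertex_sign_change:
  assumes "(\<Sum>m<4. L m *\<^sub>R M m) = 0" "\<And>m. m < 4 \<Longrightarrow> L m \<noteq> 0" "v \<in> face_vertices C F"
  shows "\<exists>p\<in>{..<4} - incident v. 0 < L p" and "\<exists>q\<in>{..<4} - incident v. L q < 0"
proof -
  let ?K = "{..<4} - incident v"
  obtain i j where "incident v = {i, j}"
    by (rule face_vertex_incident[OF assms(3)])
  moreover obtain k where "k < 4" "k \<noteq> i" "k \<noteq> j"
    by (rule ex_third_index)
  ultimately have "?K \<noteq> {}"
    by blast
  have "(\<Sum>m\<in>?K. L m * (M m \<bullet> v)) = (\<Sum>m<4. L m * (M m \<bullet> v))"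
    by (rule sum.mono_neutral_left) (auto simp: incident_def)
  also have "\<dots> = (\<Sum>m<4. L m *\<^sub>R M m) \<bullet> v"
    by (simp add: inner_sum_left)
  finally have "(\<Sum>m\<in>?K. L m * (M m \<bullet> v)) = 0"
    using assms(1) by simp
  then show "\<exists>p\<in>?K. 0 < L p" and "\<exists>q\<in>?K. L q < 0"
    using \<open>?K \<noteq> {}\<close> face_vertexD(2)[OF assms(3)] assms(2)
    by (auto intro!: sum_zero_sign_change[of ?K L "\<lambda>m. M m \<bullet> v"])
qed

end

lemma face_normals:
  assumes "general_position4 C" "F \<in> faces C"
  obtains M where "four_circle_face C M F"
proof -
  obtain N where N: "\<And>i. i < 4 \<Longrightarrow> C i = {x \<in> sphere 0 1. N i \<bullet> x = 0}"
    and gp: "general_position_normals N"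
    using general_position4_normals[OF assms(1)] by blast
  from assms(2) obtain x0 where x0: "x0 \<in> sphere 0 1 - (\<Union>i<4. C i)"
    and F: "F = connected_component_set (sphere 0 1 - (\<Union>i<4. C i)) x0"
    unfolding faces_def components_iff by blast
  define M where "M i = (if 0 < N i \<bullet> x0 then N i else - N i)" for i
  have circles: "C i = {x \<in> sphere 0 1. M i \<bullet> x = 0}" if "i < 4" for i
    using N[OF that] by (auto simp: M_def)
  have x0_pos: "\<forall>i\<in>{..<4}. 0 < M i \<bullet> x0"
  proof
    fix i :: nat assume "i \<in> {..<4}"
    then have "N i \<bullet> x0 \<noteq> 0"
      using x0 N by auto
    then show "0 < M i \<bullet> x0"
      by (auto simp: M_def)
  qed
  have "sphere 0 1 - (\<Union>i<4. C i) = sphere 0 1 - (\<Union>i\<in>{..<4}. {x. M i \<bullet> x = 0})"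
    using circles by auto
  then have F_cell: "F = {x \<in> sphere 0 1. \<forall>i<4. 0 < M i \<bullet> x}"
    using connected_component_sphere_cell[of "{..<4}" x0 M] x0 x0_pos unfolding F
    by (simp add: Ball_def lessThan_empty_iff)
  show ?thesis
  proof (intro that conjI four_circle_face.intro)
    show "general_position_normals M"
      using general_position_normalsD[OF gp]
      by (auto simp: general_position_normals_def M_def cross_mult_left cross_mult_right)
  qed (use circles F_cell x0 x0_pos in auto)
qed

section \<open>Two positive and two negative coefficients\<close>

unbundle no cross3_syntax

lemma eq_2_of_sum_4_prod_ge_4:
  fixes a b :: nat
  assumes "a + b = 4" "4 \<le> a * b"
  shows "a = 2" and "b = 2"
proof -
  have "a \<in> {0, 1, 2, 3, 4}"
    using assms(1) by auto
  then show "a = 2" and "b = 2"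
    using assms by (auto simp: eval_nat_numeral)
qed

lemma card_2_other:
  assumes "card A = 2" "a \<in> A"
  obtains b where "A = {a, b}" "a \<noteq> b"
  using assms by (auto simp: card_2_iff doubleton_eq_iff)

lemma two_by_two_split:
  assumes "card P = 2" "card N = 2" "P \<inter> N = {}" "p \<in> P" "q \<in> N"
  obtains p' q' where "P = {p, p'}" "N = {q, q'}" "distinct [p, p', q, q']"
    and "\<And>f. (\<Sum>(x, y)\<in>P \<times> N. f x y) = f p q + f p q' + f p' q + f p' q'"
proof -
  obtain p' where p': "P = {p, p'}" "p \<noteq> p'"
    using card_2_other[OF assms(1,4)] .
  moreover obtain q' where q': "N = {q, q'}" "q \<noteq> q'"
    using card_2_other[OF assms(2,5)] .
  moreover have "(\<Sum>(x, y)\<in>P \<times> N. f x y) = f p q + f p q' + f p' q + f p' q'" for f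
    using p' q' by (simp add: sum.cartesian_product[symmetric] add.assoc)
  ultimately show ?thesis
    using that[of p' q'] assms(3-5) by auto
qed

lemma eq_sign_pair_of_complement:
  assumes "card P = 2" "card N = 2" "P \<inter> N = {}" "P \<union> N = {..<4}"
    and "E \<subseteq> {..<4}" "{..<4} - E = {p, q}" "p \<in> P" "q \<in> N"
  shows "\<exists>p'\<in>P. \<exists>q'\<in>N. E = {p', q'}"
proof -
  obtain p' q' where pq: "P = {p, p'}" "N = {q, q'}" and d: "distinct [p, p', q, q']"
    using two_by_two_split[OF assms(1-3,7,8)] by blast
  have U: "{..<4} = {p, p', q, q'}"
    using assms(4) pq by auto
  have "E = {..<4} - ({..<4} - E)"
    using assms(5) by blast
  also have "\<dots> = {..<4} - {p, q}"
    by (simp only: assms(6))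
  also have "\<dots> = {p', q'}"
    unfolding U using d by auto
  finally show ?thesis
    using pq by blast
qed

lemma complement_eq_sign_pair:
  fixes L :: "nat \<Rightarrow> real"
  assumes "E \<subseteq> {..<4}" "card E = 2" and "\<exists>p\<in>{..<4} - E. 0 < L p" "\<exists>q\<in>{..<4} - E. L q < 0"
  obtains p q where "p < 4" "0 < L p" "q < 4" "L q < 0" "{..<4} - E = {p, q}"
proof -
  obtain p q where pq: "p \<in> {..<4} - E" "q \<in> {..<4} - E" "0 < L p" "L q < 0"
    using assms(3,4) by blast
  then have "p \<noteq> q"
    by auto
  moreover have "card ({..<4} - E) = 2"
    using assms(1,2) by (subst card_Diff_subset) (auto intro: finite_subset)
  ultimately have "{..<4} - E = {p, q}"
    using pq by (intro card_subset_eq[symmetric]) auto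
  then show ?thesis
    using that[of p q] pq by auto
qed

lemma card_sign_sets_eq_2:
  fixes L :: "nat \<Rightarrow> real" and E :: "nat \<Rightarrow> nat set"
  defines "P \<equiv> {m. m < 4 \<and> 0 < L m}" and "N \<equiv> {m. m < 4 \<and> L m < 0}"
  assumes L: "\<And>m. m < 4 \<Longrightarrow> L m \<noteq> 0"
    and inj: "inj_on E {..<4}"
    and E: "\<And>k. k < 4 \<Longrightarrow> E k \<subseteq> {..<4} \<and> card (E k) = 2"
    and pos: "\<And>k. k < 4 \<Longrightarrow> \<exists>p\<in>{..<4} - E k. 0 < L p"
    and neg: "\<And>k. k < 4 \<Longrightarrow> \<exists>q\<in>{..<4} - E k. L q < 0"
  shows "card P = 2" and "card N = 2"
proof -
  have PN: "P \<union> N = {..<4}" "P \<inter> N = {}" "finite P" "finite N"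
    using L by (auto simp: P_def N_def neq_iff)
  let ?pair = "\<lambda>(p, q). {p, q}"
  have compl: "{..<4} - E k \<in> ?pair ` (P \<times> N)" if k: "k < 4" for k
  proof -
    obtain p q where "p < 4" "0 < L p" "q < 4" "L q < 0" "{..<4} - E k = {p, q}"
      using complement_eq_sign_pair[of "E k" L] E[OF k] pos[OF k] neg[OF k] by blast
    then show ?thesis
      by (force simp: P_def N_def)
  qed
  have "inj_on (\<lambda>k. {..<4} - E k) {..<4}"
  proof (rule inj_onI)
    fix k k' assume k: "k \<in> {..<4}" "k' \<in> {..<4}" and eq: "{..<4} - E k = {..<4} - E k'"
    have "E k = {..<4} - ({..<4} - E k)"
      using E k by auto
    also have "\<dots> = E k'"
      unfolding eq using E k by auto
    finally show "k = k'"
      using inj_onD[OF inj _ k] by blast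
  qed
  then have "4 = card ((\<lambda>k. {..<4} - E k) ` {..<4})"
    by (simp add: card_image)
  also have "\<dots> \<le> card (?pair ` (P \<times> N))"
    using compl PN by (intro card_mono) auto
  also have "\<dots> \<le> card P * card N"
    using card_image_le[of "P \<times> N" ?pair] PN by (simp add: card_cartesian_product)
  finally have "4 \<le> card P * card N" .
  moreover have "card P + card N = 4"
    using PN card_Un_disjoint[of P N] by simp
  ultimately show "card P = 2" and "card N = 2"
    using eq_2_of_sum_4_prod_ge_4 by blast+
qed

lemma sign_pairs_bij:
  fixes L :: "nat \<Rightarrow> real" and E :: "nat \<Rightarrow> nat set"
  defines "P \<equiv> {m. m < 4 \<and> 0 < L m}" and "N \<equiv> {m. m < 4 \<and> L m < 0}"
  assumes L: "\<And>m. m < 4 \<Longrightarrow> L m \<noteq> 0"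
    and inj: "inj_on E {..<4}"
    and E: "\<And>k. k < 4 \<Longrightarrow> E k \<subseteq> {..<4} \<and> card (E k) = 2"
    and pos: "\<And>k. k < 4 \<Longrightarrow> \<exists>p\<in>{..<4} - E k. 0 < L p"
    and neg: "\<And>k. k < 4 \<Longrightarrow> \<exists>q\<in>{..<4} - E k. L q < 0"
    and P2: "card P = 2" and N2: "card N = 2"
  shows "\<exists>h. bij_betw h {..<4} (P \<times> N) \<and> (\<forall>k<4. E k = {fst (h k), snd (h k)})"
proof -
  have PN: "P \<union> N = {..<4}" "P \<inter> N = {}" "finite P" "finite N"
    using L by (auto simp: P_def N_def neq_iff)
  have "\<exists>pq. pq \<in> P \<times> N \<and> E k = {fst pq, snd pq}" if "k \<in> {..<4}" for k
  proof -
    from that have k: "k < 4"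
      by simp
    obtain p q where "p < 4" "0 < L p" "q < 4" "L q < 0" and compl: "{..<4} - E k = {p, q}"
      using complement_eq_sign_pair[of "E k" L] E[OF k] pos[OF k] neg[OF k] by blast
    then have "p \<in> P" "q \<in> N"
      by (simp_all add: P_def N_def)
    then obtain p' q' where "p' \<in> P" "q' \<in> N" "E k = {p', q'}"
      using eq_sign_pair_of_complement[OF P2 N2 PN(2,1) _ compl] E[OF k] by blast
    then show ?thesis
      by (intro exI[of _ "(p', q')"]) auto
  qed
  then obtain h where h: "\<forall>k\<in>{..<4}. h k \<in> P \<times> N \<and> E k = {fst (h k), snd (h k)}"
    using bchoice[of "{..<4}" "\<lambda>k pq. pq \<in> P \<times> N \<and> E k = {fst pq, snd pq}"] by blast
  have "inj_on h {..<4}"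
  proof (rule inj_onI)
    fix k k' assume k: "k \<in> {..<4}" "k' \<in> {..<4}" and "h k = h k'"
    then have "E k = E k'"
      using h by simp
    then show "k = k'"
      using inj_onD[OF inj _ k] by blast
  qed
  moreover have "h ` {..<4} = P \<times> N"
  proof (rule card_subset_eq)
    show "h ` {..<4} \<subseteq> P \<times> N"
      using h by (simp add: image_subset_iff)
    show "card (h ` {..<4}) = card (P \<times> N)"
      using \<open>inj_on h {..<4}\<close> P2 N2 by (simp add: card_image card_cartesian_product)
  qed (use PN in auto)
  ultimately have "bij_betw h {..<4} (P \<times> N)"
    by (simp add: bij_betw_def)
  with h show ?thesis
    by auto
qed

lemma vangle_sum_sign_pairs:
  fixes M :: "nat \<Rightarrow> real^3" and L :: "nat \<Rightarrow> real"
  defines "P \<equiv> {m. m < 4 \<and> 0 < L m}" and "N \<equiv> {m. m < 4 \<and> L m < 0}"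
  assumes gp: "general_position_normals M" and L: "\<And>m. m < 4 \<Longrightarrow> L m \<noteq> 0"
    and rel: "(\<Sum>m<4. L m *\<^sub>R M m) = 0" and P2: "card P = 2" and N2: "card N = 2"
  shows "(\<Sum>(p, q)\<in>P \<times> N. vangle (M p) (M q)) < 2 * pi"
    and "\<And>p q. p \<in> P \<Longrightarrow> q \<in> N \<Longrightarrow> 2 * vangle (M p) (M q) < (\<Sum>(p, q)\<in>P \<times> N. vangle (M p) (M q))"
proof -
  let ?S = "\<Sum>(p, q)\<in>P \<times> N. vangle (M p) (M q)"
  have PN: "P \<union> N = {..<4}" "P \<inter> N = {}"
    using L by (auto simp: P_def N_def neq_iff)
  show "2 * vangle (M p) (M q) < ?S" if pq: "p \<in> P" "q \<in> N" for p q
  proof -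
    obtain p' q' where pq': "P = {p, p'}" "N = {q, q'}" and d: "distinct [p, p', q, q']"
      and S: "?S = vangle (M p) (M q) + vangle (M p) (M q') + vangle (M p') (M q) + vangle (M p') (M q')"
      using two_by_two_split[OF P2 N2 PN(2) pq] by blast
    have s: "set [p, p', q, q'] \<subseteq> {..<4}"
      using PN(1) pq' by auto
    show ?thesis
      using general_position_normals_vangle_less[OF gp d s] unfolding S by linarith
  qed
  have "P \<noteq> {}" "N \<noteq> {}"
    using P2 N2 by auto
  then obtain p q where "p \<in> P" "q \<in> N"
    by blast
  then obtain p' q' where pq: "P = {p, p'}" "N = {q, q'}" and d: "distinct [p, p', q, q']"
    and S: "?S = vangle (M p) (M q) + vangle (M p) (M q') + vangle (M p') (M q) + vangle (M p') (M q')"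
    using two_by_two_split[OF P2 N2 PN(2)] by blast
  have U: "{..<4} = {p, p', q, q'}"
    using PN(1) pq by auto
  then have s: "set [p, p', q, q'] \<subseteq> {..<4}"
    by simp
  have sum4: "L p *\<^sub>R M p + L p' *\<^sub>R M p' + L q *\<^sub>R M q + L q' *\<^sub>R M q' = 0"
    using rel d unfolding U by (simp add: add.assoc)
  have "L p *\<^sub>R M p + L p' *\<^sub>R M p' =
      (L p *\<^sub>R M p + L p' *\<^sub>R M p' + L q *\<^sub>R M q + L q' *\<^sub>R M q') + ((- L q) *\<^sub>R M q + (- L q') *\<^sub>R M q')"
    by (simp add: algebra_simps)
  also have "\<dots> = (- L q) *\<^sub>R M q + (- L q') *\<^sub>R M q'"
    by (simp only: sum4 add_0_left)
  finally have "L p *\<^sub>R M p + L p' *\<^sub>R M p' = (- L q) *\<^sub>R M q + (- L q') *\<^sub>R M q'" .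
  moreover have "0 < L p" "0 < L p'" "0 < - L q" "0 < - L q'"
    using pq by (auto simp: P_def N_def set_eq_iff)
  ultimately show "?S < 2 * pi"
    unfolding S by (intro general_position_normals_quadrilateral[OF gp d s])
qed

lemma quadrilateral_angle_inequalities:
  fixes a \<theta> :: "nat \<Rightarrow> real"
  assumes a: "\<And>k. k < 4 \<Longrightarrow> pi * a k = pi - \<theta> k" and pos: "\<And>k. k < 4 \<Longrightarrow> 0 < \<theta> k"
    and sum: "(\<Sum>k<4. \<theta> k) < 2 * pi" and half: "\<And>k. k < 4 \<Longrightarrow> 2 * \<theta> k < (\<Sum>k<4. \<theta> k)"
  shows "(\<forall>k<4. 0 < a k \<and> a k < 1) \<and> 0 < a 0 + a 1 + a 2 + a 3 - 2 \<and>
    a 0 + a 1 + a 2 + a 3 - 2 < 2 * Min (a ` {..<4})"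
proof -
  define S where "S = (\<Sum>k<4. \<theta> k)"
  have a_eq: "a k = 1 - \<theta> k / pi" if "k < 4" for k
    using a[OF that] by (simp add: field_simps)
  have "S = \<theta> 0 + \<theta> 1 + \<theta> 2 + \<theta> 3"
    by (simp add: S_def eval_nat_numeral)
  then have "a 0 + a 1 + a 2 + a 3 - 2 = 2 - S / pi"
    using a_eq[of 0] a_eq[of 1] a_eq[of 2] a_eq[of 3] by (simp add: field_simps)
  moreover have "0 < a k \<and> a k < 1" if "k < 4" for k
    using pos[OF that] half[OF that] sum by (simp add: a_eq[OF that] field_simps)
  moreover have "0 < 2 - S / pi"
    using sum by (simp add: S_def field_simps)
  moreover have "2 - S / pi < 2 * Min (a ` {..<4})"
  proof -
    have "(2 - S / pi) / 2 < a k" if "k < 4" for k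
      using half[OF that] by (simp add: a_eq[OF that] S_def field_simps)
    then have "(2 - S / pi) / 2 < Min (a ` {..<4})"
      by (subst Min_gr_iff) (auto simp: lessThan_empty_iff)
    then show ?thesis
      by simp
  qed
  ultimately show ?thesis
    by simp
qed

context four_circle_face
begin

lemma face_vertices_sign_pairs:
  fixes v :: "nat \<Rightarrow> real^3" and L :: "nat \<Rightarrow> real"
  assumes vertices: "face_vertices C F = v ` {..<4}" and "inj_on v {..<4}"
    and L: "\<And>m. m < 4 \<Longrightarrow> L m \<noteq> 0" and rel: "(\<Sum>m<4. L m *\<^sub>R M m) = 0"
  shows "card {m. m < 4 \<and> 0 < L m} = 2" and "card {m. m < 4 \<and> L m < 0} = 2"
    and "\<exists>h. bij_betw h {..<4} ({m. m < 4 \<and> 0 < L m} \<times> {m. m < 4 \<and> L m < 0}) \<and>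
      (\<forall>k<4. incident (v k) = {fst (h k), snd (h k)})"
proof -
  have vertex: "v k \<in> face_vertices C F" if "k < 4" for k
    using vertices that by auto
  have E: "incident (v k) \<subseteq> {..<4} \<and> card (incident (v k)) = 2" if k: "k < 4" for k
  proof -
    obtain i j where "i \<noteq> j" "incident (v k) = {i, j}"
      using face_vertex_incident[OF vertex[OF k]] by blast
    then show ?thesis
      using incident_subset[of "v k"] by simp
  qed
  have inj: "inj_on (\<lambda>k. incident (v k)) {..<4}"
  proof (rule inj_onI)
    fix k k' assume "k \<in> {..<4}" "k' \<in> {..<4}" "incident (v k) = incident (v k')"
    then show "k = k'"
      using face_vertex_eq[OF vertex vertex] inj_onD[OF \<open>inj_on v {..<4}\<close>] by simp
  qed
  note sign = face_vertex_sign_change[OF rel L vertex]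
  show P2: "card {m. m < 4 \<and> 0 < L m} = 2" and N2: "card {m. m < 4 \<and> L m < 0} = 2"
    using card_sign_sets_eq_2[OF L inj E sign] by blast+
  show "\<exists>h. bij_betw h {..<4} ({m. m < 4 \<and> 0 < L m} \<times> {m. m < 4 \<and> L m < 0}) \<and>
      (\<forall>k<4. incident (v k) = {fst (h k), snd (h k)})"
    using sign_pairs_bij[OF L inj E sign] P2 N2 by blast
qed

lemma quadrilateral_exterior_angles:
  fixes v :: "nat \<Rightarrow> real^3"
  assumes vertices: "face_vertices C F = v ` {..<4}" and "inj_on v {..<4}"
  obtains \<theta> where "\<And>k. k < 4 \<Longrightarrow> interior_angle C F (v k) = pi - \<theta> k"
    and "\<And>k. k < 4 \<Longrightarrow> 0 < \<theta> k"
    and "(\<Sum>k<4. \<theta> k) < 2 * pi" and "\<And>k. k < 4 \<Longrightarrow> 2 * \<theta> k < (\<Sum>k<4. \<theta> k)"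
proof -
  obtain L where L: "\<And>m. m < 4 \<Longrightarrow> L m \<noteq> 0" and rel: "(\<Sum>m<4. L m *\<^sub>R M m) = 0"
    using general_position_normals_relation[OF general_position] by blast
  let ?P = "{m. m < 4 \<and> 0 < L m}" and ?N = "{m. m < 4 \<and> L m < 0}"
  obtain h where h: "bij_betw h {..<4} (?P \<times> ?N)"
    and incident: "\<And>k. k < 4 \<Longrightarrow> incident (v k) = {fst (h k), snd (h k)}"
    using face_vertices_sign_pairs(3)[OF assms L rel] by blast
  define \<theta> where "\<theta> k = vangle (M (fst (h k))) (M (snd (h k)))" for k
  have h_mem: "fst (h k) \<in> ?P" "snd (h k) \<in> ?N" if "k < 4" for k
    using bij_betwE[OF h] that by (simp_all add: mem_Times_iff)
  have pair: "fst (h k) < 4" "snd (h k) < 4" "fst (h k) \<noteq> snd (h k)" if "k < 4" for k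
    using h_mem[OF that] by auto
  have sum: "(\<Sum>k<4. \<theta> k) = (\<Sum>(p, q)\<in>?P \<times> ?N. vangle (M p) (M q))"
    unfolding \<theta>_def using sum.reindex_bij_betw[OF h, of "\<lambda>(p, q). vangle (M p) (M q)"]
    by (simp add: case_prod_beta)
  note bounds = vangle_sum_sign_pairs[of M L, OF general_position L rel
      face_vertices_sign_pairs(1,2)[OF assms L rel]]
  show ?thesis
  proof (rule that)
    show "interior_angle C F (v k) = pi - \<theta> k" if "k < 4" for k
      using interior_angle_face_vertex[OF _ incident[OF that] pair(3)[OF that]] vertices that
      by (auto simp: \<theta>_def)
    show "0 < \<theta> k" if "k < 4" for k
      unfolding \<theta>_def using general_position_normals_vangle_pos[OF general_position pair[OF that]] .
    show "(\<Sum>k<4. \<theta> k) < 2 * pi"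
      unfolding sum by (rule bounds(1))
    show "2 * \<theta> k < (\<Sum>k<4. \<theta> k)" if "k < 4" for k
      unfolding sum unfolding \<theta>_def by (rule bounds(2)) (use h_mem[OF that] in simp_all)
  qed
qed

end

section \<open>The octahedral pyramid\<close>

lemma vector_4 [simp]:
  "(vector [a, b, c, d] :: ('a::zero)^4) $ 1 = a"
  "(vector [a, b, c, d] :: ('a::zero)^4) $ 2 = b"
  "(vector [a, b, c, d] :: ('a::zero)^4) $ 3 = c"
  "(vector [a, b, c, d] :: ('a::zero)^4) $ 4 = d"
  unfolding vector_def by simp_all

definition octahedral_pyramid :: "(real^4) set" where
  "octahedral_pyramid = {p. (\<forall>i. 0 < p$i \<and> p$i < 1) \<and>
     0 < (\<Sum>i\<in>UNIV. p$i) - 2 \<and> (\<Sum>i\<in>UNIV. p$i) - 2 < 2 * Min (range (\<lambda>i. p$i))}"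

definition pyramid_vertices :: "(real^4) set" where
  "pyramid_vertices = {vector [1,1,1,1], vector [0,0,1,1], vector [0,1,0,1],
     vector [0,1,1,0], vector [1,0,0,1], vector [1,0,1,0], vector [1,1,0,0]}"

lemma mem_octahedral_pyramid:
  "p \<in> octahedral_pyramid \<longleftrightarrow>
     (\<forall>i. p$i < 1) \<and> 2 < (\<Sum>i\<in>UNIV. p$i) \<and> (\<forall>i. (\<Sum>j\<in>UNIV. p$j) - 2 < 2 * p$i)"
proof -
  have min: "x < 2 * Min (range (\<lambda>i. p$i)) \<longleftrightarrow> (\<forall>i. x < 2 * p$i)" for x
    using Min_gr_iff[of "range (\<lambda>i. p$i)" "x / 2"] by (auto simp: field_simps)
  have pos: "0 < p$i" if "2 < (\<Sum>j\<in>UNIV. p$j)" "(\<Sum>j\<in>UNIV. p$j) - 2 < 2 * p$i" for i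
    using that by linarith
  show ?thesis
    unfolding octahedral_pyramid_def mem_Collect_eq min by (auto intro: pos)
qed

lemma open_octahedral_pyramid: "open octahedral_pyramid"
proof -
  have eq: "octahedral_pyramid = {p. p$1 < 1 \<and> p$2 < 1 \<and> p$3 < 1 \<and> p$4 < 1 \<and>
      2 < p$1 + p$2 + p$3 + p$4 \<and> p$1 + p$2 + p$3 + p$4 - 2 < 2 * p$1 \<and>
      p$1 + p$2 + p$3 + p$4 - 2 < 2 * p$2 \<and> p$1 + p$2 + p$3 + p$4 - 2 < 2 * p$3 \<and>
      p$1 + p$2 + p$3 + p$4 - 2 < 2 * p$4}"
    by (auto simp: mem_octahedral_pyramid sum_4 forall_4)
  show ?thesis
    unfolding eq by (intro open_Collect_conj open_Collect_less continuous_intros)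
qed

lemma interior_convex_hull_subset_halfspace:
  assumes "a \<noteq> 0" and "\<And>v. v \<in> V \<Longrightarrow> a \<bullet> v \<le> b"
  shows "interior (convex hull V) \<subseteq> {x. a \<bullet> x < b}"
proof -
  have "convex hull V \<subseteq> {x. a \<bullet> x \<le> b}"
    using assms(2) by (intro hull_minimal convex_halfspace_le) auto
  then show ?thesis
    using interior_mono interior_halfspace_le[OF assms(1)] by blast
qed

lemma pyramid_vertices_bounds:
  assumes "v \<in> pyramid_vertices"
  shows "\<forall>i. v$i \<le> 1" and "2 \<le> (\<Sum>i\<in>UNIV. v$i)" and "\<forall>i. (\<Sum>j\<in>UNIV. v$j) - 2 \<le> 2 * v$i"
  using assms by (auto simp: pyramid_vertices_def forall_4 sum_4)

lemma interior_convex_hull_subset_pyramid: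
  "interior (convex hull pyramid_vertices) \<subseteq> octahedral_pyramid"
proof
  fix p assume p: "p \<in> interior (convex hull pyramid_vertices)"
  define one :: "real^4" where "one = (\<chi> i. 1)"
  have one_inner: "one \<bullet> x = (\<Sum>i\<in>UNIV. x$i)" for x
    by (simp add: one_def inner_vec_def)
  have "p \<in> {x. axis i 1 \<bullet> x < 1}" for i
    using pyramid_vertices_bounds(1)
    by (intro subsetD[OF interior_convex_hull_subset_halfspace p]) (auto simp: inner_axis')
  moreover have "p \<in> {x. (- one) \<bullet> x < - 2}"
  proof (rule subsetD[OF interior_convex_hull_subset_halfspace p])
    show "- one \<noteq> 0"
      by (simp add: one_def vec_eq_iff)
    show "(- one) \<bullet> v \<le> - 2" if "v \<in> pyramid_vertices" for v
      using pyramid_vertices_bounds(2)[OF that] by (simp add: one_inner)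
  qed
  moreover have "p \<in> {x. (one - 2 *\<^sub>R axis i 1) \<bullet> x < 2}" for i
  proof (rule subsetD[OF interior_convex_hull_subset_halfspace p])
    show "one - 2 *\<^sub>R axis i 1 \<noteq> 0"
      by (simp add: one_def vec_eq_iff axis_def exI[of _ i])
    show "(one - 2 *\<^sub>R axis i 1) \<bullet> v \<le> 2" if "v \<in> pyramid_vertices" for v
      using pyramid_vertices_bounds(3)[OF that, rule_format, of i]
      by (simp add: inner_diff_left one_inner inner_axis')
  qed
  ultimately show "p \<in> octahedral_pyramid"
    by (simp add: mem_octahedral_pyramid inner_diff_left one_inner inner_axis' algebra_simps)
qed

lemma cross_polytope_bound:
  fixes t a b c d :: real
  assumes "2 * t = a + b + c + d - 2" "t \<le> a" "t \<le> b" "t \<le> c" "t \<le> d"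
    and "a \<le> 1" "b \<le> 1" "c \<le> 1" "d \<le> 1"
  shows "\<bar>a + b - c - d\<bar> + \<bar>a + c - b - d\<bar> + \<bar>a + d - b - c\<bar> \<le> 2 - 2 * t"
  using assms by (simp add: abs_if)

lemma octahedral_pyramid_subset_convex_hull:
  "octahedral_pyramid \<subseteq> convex hull pyramid_vertices"
proof
  fix p assume "p \<in> octahedral_pyramid"
  then have lt1: "p$1 < 1" "p$2 < 1" "p$3 < 1" "p$4 < 1"
    and sum_gt: "2 < p$1 + p$2 + p$3 + p$4"
    and lt_min: "p$1 + p$2 + p$3 + p$4 - 2 < 2 * p$1" "p$1 + p$2 + p$3 + p$4 - 2 < 2 * p$2"
      "p$1 + p$2 + p$3 + p$4 - 2 < 2 * p$3" "p$1 + p$2 + p$3 + p$4 - 2 < 2 * p$4"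
    by (auto simp: mem_octahedral_pyramid sum_4 forall_4)
  define t where "t = (p$1 + p$2 + p$3 + p$4 - 2) / 2"
  define d1 where "d1 = p$1 + p$2 - p$3 - p$4"
  define d2 where "d2 = p$1 + p$3 - p$2 - p$4"
  define d3 where "d3 = p$1 + p$4 - p$2 - p$3"
  define y where "y = (2 - 2 * t - \<bar>d1\<bar> - \<bar>d2\<bar> - \<bar>d3\<bar>) / 12"
  have t: "0 < t" "t < p$1" "t < p$2" "t < p$3" "t < p$4"
    unfolding t_def using sum_gt lt_min by auto
  have "\<bar>d1\<bar> + \<bar>d2\<bar> + \<bar>d3\<bar> \<le> 2 - 2 * t"
    unfolding d1_def d2_def d3_def using t lt1 by (intro cross_polytope_bound) (auto simp: t_def)
  then have "0 \<le> y"
    by (simp add: y_def)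
  \<comment> \<open>The apex gets weight t; the rest is the centre of the octahedron (weight y on every
      base vertex) plus a point of the cross-polytope spanned by its three antipodal pairs.\<close>
  define w :: "nat \<Rightarrow> real^4" where "w = (\<lambda>k. [vector [1,1,1,1], vector [1,1,0,0],
      vector [0,0,1,1], vector [1,0,1,0], vector [0,1,0,1], vector [1,0,0,1], vector [0,1,1,0]] ! k)"
  define c :: "nat \<Rightarrow> real" where "c = (\<lambda>k. [t, y + (\<bar>d1\<bar> + d1) / 4, y + (\<bar>d1\<bar> - d1) / 4,
      y + (\<bar>d2\<bar> + d2) / 4, y + (\<bar>d2\<bar> - d2) / 4, y + (\<bar>d3\<bar> + d3) / 4, y + (\<bar>d3\<bar> - d3) / 4] ! k)"
  have "(\<Sum>k<7. c k *\<^sub>R w k) \<in> convex hull pyramid_vertices"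
  proof (rule convex_sum)
    show "sum c {..<7} = 1"
      by (simp add: c_def eval_nat_numeral y_def field_simps)
    show "0 \<le> c k" and "w k \<in> convex hull pyramid_vertices" if "k \<in> {..<7}" for k
    proof -
      from that have "k \<in> {0, 1, 2, 3, 4, 5, 6}"
        by auto
      then show "0 \<le> c k" and "w k \<in> convex hull pyramid_vertices"
        using t \<open>0 \<le> y\<close> by (auto simp: c_def w_def pyramid_vertices_def intro: hull_inc)
    qed
  qed simp_all
  moreover have "(\<Sum>k<7. c k *\<^sub>R w k) = p"
    by (simp add: c_def w_def eval_nat_numeral vec_eq_iff forall_4 y_def t_def d1_def d2_def d3_def
        field_simps)
  ultimately show "p \<in> convex hull pyramid_vertices"
    by simp
qed

lemma octahedral_pyramid_eq_interior_convex_hull: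
  "octahedral_pyramid = interior (convex hull pyramid_vertices)"
  using interior_maximal[OF octahedral_pyramid_subset_convex_hull open_octahedral_pyramid]
    interior_convex_hull_subset_pyramid by blast

lemma convex_octahedral_pyramid: "convex octahedral_pyramid"
  unfolding octahedral_pyramid_eq_interior_convex_hull by (intro convex_interior convex_convex_hull)

theorem proposition5p2:
  fixes C :: "nat \<Rightarrow> (real^3) set" and F :: "(real^3) set"
    and v :: "nat \<Rightarrow> real^3" and a :: "nat \<Rightarrow> real"
  assumes "general_position4 C"
    and "F \<in> faces C"
    and "face_vertices C F = v ` {..<4}" and "inj_on v {..<4}"
    and "\<forall>k<4. \<exists>i<4. v k \<in> C i \<and> v ((k + 1) mod 4) \<in> C i"
    and "\<forall>k<4. pi * a k = interior_angle C F (v k)"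
  shows "(\<forall>k<4. 0 < a k \<and> a k < 1) \<and>
         0 < a 0 + a 1 + a 2 + a 3 - 2 \<and>
         a 0 + a 1 + a 2 + a 3 - 2 < 2 * Min (a ` {..<4})
       \<and> {p :: real^4. (\<forall>i. 0 < p$i \<and> p$i < 1) \<and>
             0 < (\<Sum>i\<in>UNIV. p$i) - 2 \<and> (\<Sum>i\<in>UNIV. p$i) - 2 < 2 * Min (range (\<lambda>i. p$i))}
         = interior (convex hull {vector [1,1,1,1], vector [0,0,1,1], vector [0,1,0,1],
             vector [0,1,1,0], vector [1,0,0,1], vector [1,0,1,0], vector [1,1,0,0]})
       \<and> convex {p :: real^4. (\<forall>i. 0 < p$i \<and> p$i < 1) \<and>
             0 < (\<Sum>i\<in>UNIV. p$i) - 2 \<and> (\<Sum>i\<in>UNIV. p$i) - 2 < 2 * Min (range (\<lambda>i. p$i))}"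
proof -
  obtain M where "four_circle_face C M F"
    using face_normals[OF assms(1,2)] by blast
  then obtain \<theta> where "\<And>k. k < 4 \<Longrightarrow> interior_angle C F (v k) = pi - \<theta> k"
    and "\<And>k. k < 4 \<Longrightarrow> 0 < \<theta> k" and "(\<Sum>k<4. \<theta> k) < 2 * pi"
    and "\<And>k. k < 4 \<Longrightarrow> 2 * \<theta> k < (\<Sum>k<4. \<theta> k)"
    using four_circle_face.quadrilateral_exterior_angles[OF _ assms(3,4)] by blast
  then have "(\<forall>k<4. 0 < a k \<and> a k < 1) \<and> 0 < a 0 + a 1 + a 2 + a 3 - 2 \<and>
      a 0 + a 1 + a 2 + a 3 - 2 < 2 * Min (a ` {..<4})"
    using assms(6) by (intro quadrilateral_angle_inequalities) auto
  with octahedral_pyramid_eq_interior_convex_hull convex_octahedral_pyramid show ?thesis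
    unfolding octahedral_pyramid_def pyramid_vertices_def by blast
qed

end
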